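(* Let $X$ be a compact metric space and let $F:\mathscr{K}(X)\to\mathscr{K}(X)$ be a continuous monotone map. If $X$ is an attractor of $F$, then $X$ is asymptotically stable. In particular, if $X$ is a strict attractor of a finite family $\mathscr{F}$ of continuous maps of $X$ (i.e. of its Hutchinson operator), then $X$ is asymptotically stable for the Hutchinson operator.
   Context: $\mathscr{K}(X)$ is the set of nonempty compact subsets of $X$ with the Hausdorff distance $\mathrm{d_H}$. $F$ is monotone if $A\subset B$ implies $F(A)\subset F(B)$. $K\in\mathscr{K}(X)$ is an attractor of $F$ if there is an open set $\mathcal{U}\subset\mathscr{K}(X)$ containing $K$ with $F^n(C)\to K$ in $\mathrm{d_H}$ for every $C\in\mathcal{U}$. An attractor $K$ is asymptotically stable if moreover for every $\varepsilon>0$ there is $\delta>0$ such that $\mathrm{d_H}(F^n(S),K)<\varepsilon$ for all $n\geq0$ and all $S\in\mathscr{K}(X)$ with $\mathrm{d_H}(S,K)<\delta$. The Hutchinson operator of $\mathscr{F}=\{f_1,\dots,f_k\}$ is $F(A)=\bigcup_i f_i(A)$. $K$ is a strict attractor if there is an open $U\subset X$ with $K\subset U$ and $F^n(S)\to K$ for all nonempty compact $S\subset U$. *)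

theory Defs
  imports "HOL-Analysis.Analysis"
begin

text \<open>Hausdorff distance between sets of a metric space (only used for nonempty
  compact sets, where it is the usual Hausdorff distance).\<close>
definition hausdorff_dist :: "'a::metric_space set \<Rightarrow> 'a set \<Rightarrow> real" where
  "hausdorff_dist A B = max (SUP a\<in>A. infdist a B) (SUP b\<in>B. infdist b A)"

definition KX :: "'a::metric_space set \<Rightarrow> 'a set set" where
  "KX X = {S. S \<subseteq> X \<and> compact S \<and> S \<noteq> {}}"

definition KX_open :: "'a::metric_space set \<Rightarrow> 'a set set \<Rightarrow> bool" where
  "KX_open X U \<longleftrightarrow> U \<subseteq> KX X \<and>
     (\<forall>S\<in>U. \<exists>e>0. \<forall>T\<in>KX X. hausdorff_dist T S < e \<longrightarrow> T \<in> U)"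

definition KX_map :: "'a::metric_space set \<Rightarrow> ('a set \<Rightarrow> 'a set) \<Rightarrow> bool" where
  "KX_map X F \<longleftrightarrow> (\<forall>S\<in>KX X. F S \<in> KX X)"

definition KX_continuous :: "'a::metric_space set \<Rightarrow> ('a set \<Rightarrow> 'a set) \<Rightarrow> bool" where
  "KX_continuous X F \<longleftrightarrow> (\<forall>S\<in>KX X. \<forall>e>0. \<exists>d>0. \<forall>T\<in>KX X.
      hausdorff_dist T S < d \<longrightarrow> hausdorff_dist (F T) (F S) < e)"

definition KX_monotone :: "'a::metric_space set \<Rightarrow> ('a set \<Rightarrow> 'a set) \<Rightarrow> bool" where
  "KX_monotone X F \<longleftrightarrow> (\<forall>A\<in>KX X. \<forall>B\<in>KX X. A \<subseteq> B \<longrightarrow> F A \<subseteq> F B)"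

definition attractor :: "'a::metric_space set \<Rightarrow> ('a set \<Rightarrow> 'a set) \<Rightarrow> 'a set \<Rightarrow> bool" where
  "attractor X F K \<longleftrightarrow> K \<in> KX X \<and>
     (\<exists>U. KX_open X U \<and> K \<in> U \<and>
        (\<forall>C\<in>U. (\<lambda>n. hausdorff_dist ((F ^^ n) C) K) \<longlonglongrightarrow> 0))"

definition asymptotically_stable :: "'a::metric_space set \<Rightarrow> ('a set \<Rightarrow> 'a set) \<Rightarrow> 'a set \<Rightarrow> bool" where
  "asymptotically_stable X F K \<longleftrightarrow> attractor X F K \<and>
     (\<forall>\<epsilon>>0. \<exists>\<delta>>0. \<forall>n::nat. \<forall>S\<in>KX X.
        hausdorff_dist S K < \<delta> \<longrightarrow> hausdorff_dist ((F ^^ n) S) K < \<epsilon>)"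

definition hutchinson :: "('a \<Rightarrow> 'a) set \<Rightarrow> 'a set \<Rightarrow> 'a set" where
  "hutchinson Fs A = (\<Union>f\<in>Fs. f ` A)"

definition strict_attractor :: "'a::metric_space set \<Rightarrow> ('a set \<Rightarrow> 'a set) \<Rightarrow> 'a set \<Rightarrow> bool" where
  "strict_attractor X F K \<longleftrightarrow> K \<in> KX X \<and>
     (\<exists>U. openin (top_of_set X) U \<and> K \<subseteq> U \<and>
        (\<forall>S. S \<subseteq> U \<and> compact S \<and> S \<noteq> {} \<longrightarrow>
             (\<lambda>n. hausdorff_dist ((F ^^ n) S) K) \<longlonglongrightarrow> 0))"

end

theory Submission
  imports Defs
begin

text \<open>Since \<open>F\<close> is monotone and \<open>F\<^sup>n(X) \<rightarrow> X\<close>, \<open>F(X) = X\<close>, so by continuity the first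
  \<open>N\<close> iterates of sets near \<open>X\<close> stay near \<open>X\<close>; the work is a bound for all \<open>n \<ge> N\<close> that is
  uniform in the starting set. Fix a finite \<open>\<eta>\<close>-net \<open>P\<close> of \<open>X\<close> and parametrise finite sets
  by their points \<open>s p \<in> X \<inter> ball p \<eta>\<close>. Every such set lies in the basin, so the closed sets
  \<open>Q\<^sub>N = {s. \<forall>n\<ge>N. d\<^sub>H(F\<^sup>n(s P), X) \<le> \<epsilon>}\<close> cover this locally compact parameter space,
  and by Baire one \<open>Q\<^sub>N\<close> contains a box around some \<open>s\<^sub>0\<close>. A compact \<open>S\<close> close to \<open>X\<close>
  contains a finite set \<open>t P\<close> from that box, and by monotonicity \<open>F\<^sup>n(S) \<supseteq> F\<^sup>n(t P)\<close>
  is then as close to \<open>X\<close> as \<open>F\<^sup>n(t P)\<close>. Hutchinson operators of finitely many continuous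
  maps are continuous and monotone, and a strict attractor \<open>X\<close> is an attractor.\<close>

lemma hausdorff_dist_attained:
  assumes "compact A" "A \<noteq> {}" "compact B" "B \<noteq> {}"
  obtains a b where "a \<in> A" "b \<in> B" "hausdorff_dist A B = max (infdist a B) (infdist b A)"
    "\<And>a'. a' \<in> A \<Longrightarrow> infdist a' B \<le> infdist a B" "\<And>b'. b' \<in> B \<Longrightarrow> infdist b' A \<le> infdist b A"
proof -
  have "continuous_on S (\<lambda>x. infdist x T)" for S T :: "'a set"
    by (intro continuous_intros)
  then obtain a b where a: "a \<in> A" "\<And>a'. a' \<in> A \<Longrightarrow> infdist a' B \<le> infdist a B"
    and b: "b \<in> B" "\<And>b'. b' \<in> B \<Longrightarrow> infdist b' A \<le> infdist b A"
    using continuous_attains_sup assms by metis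
  have "(SUP x\<in>A. infdist x B) = infdist a B" "(SUP x\<in>B. infdist x A) = infdist b A"
    by (rule cSup_eq_maximum; use a b in auto)+
  then show ?thesis
    using that a b unfolding hausdorff_dist_def by metis
qed

lemma hausdorff_dist_less_iff:
  assumes "compact A" "A \<noteq> {}" "compact B" "B \<noteq> {}"
  shows "hausdorff_dist A B < c \<longleftrightarrow> (\<forall>a\<in>A. infdist a B < c) \<and> (\<forall>b\<in>B. infdist b A < c)"
  by (rule hausdorff_dist_attained[OF assms]) (metis le_less_trans max_less_iff_conj)

lemma hausdorff_dist_le_iff:
  assumes "compact A" "A \<noteq> {}" "compact B" "B \<noteq> {}"
  shows "hausdorff_dist A B \<le> c \<longleftrightarrow> (\<forall>a\<in>A. infdist a B \<le> c) \<and> (\<forall>b\<in>B. infdist b A \<le> c)"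
  by (rule hausdorff_dist_attained[OF assms]) (metis order_trans max.bounded_iff)

lemma hausdorff_dist_commute: "hausdorff_dist A B = hausdorff_dist B A"
  unfolding hausdorff_dist_def by (simp add: max.commute)

lemma infdist_le_hausdorff_dist:
  assumes "compact A" "A \<noteq> {}" "compact B" "B \<noteq> {}" "a \<in> A"
  shows "infdist a B \<le> hausdorff_dist A B"
  using hausdorff_dist_le_iff[OF assms(1-4)] assms(5) by blast

lemma hausdorff_dist_nonneg:
  assumes "compact A" "A \<noteq> {}" "compact B" "B \<noteq> {}"
  shows "0 \<le> hausdorff_dist A B"
  using infdist_le_hausdorff_dist[OF assms] infdist_nonneg assms(2) by (metis ex_in_conv order_trans)

lemma hausdorff_dist_eq_0_iff:
  assumes "compact A" "A \<noteq> {}" "compact B" "B \<noteq> {}"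
  shows "hausdorff_dist A B = 0 \<longleftrightarrow> A = B"
proof
  assume "hausdorff_dist A B = 0"
  then have "(\<forall>a\<in>A. infdist a B = 0) \<and> (\<forall>b\<in>B. infdist b A = 0)"
    using hausdorff_dist_le_iff[OF assms, of 0] by (simp add: order.antisym infdist_nonneg)
  then show "A = B"
    using assms in_closed_iff_infdist_zero compact_imp_closed by blast
next
  assume "A = B"
  then show "hausdorff_dist A B = 0"
    using hausdorff_dist_le_iff[OF assms, of 0] hausdorff_dist_nonneg[OF assms] by simp
qed

lemma infdist_le_infdist_add_hausdorff_dist:
  assumes "compact A" "A \<noteq> {}" "compact B" "B \<noteq> {}"
  shows "infdist x A \<le> infdist x B + hausdorff_dist B A"
proof -
  have "continuous_on B (dist x)"
    by (intro continuous_intros)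
  then obtain b where b: "b \<in> B" "\<And>y. y \<in> B \<Longrightarrow> dist x b \<le> dist x y"
    using continuous_attains_inf assms(3,4) by metis
  have "infdist x B = dist x b"
    unfolding infdist_notempty[OF assms(4)] by (rule cInf_eq_minimum) (use b in auto)
  moreover have "infdist x A \<le> infdist b A + dist x b"
    by (rule infdist_triangle)
  moreover have "infdist b A \<le> hausdorff_dist B A"
    using infdist_le_hausdorff_dist assms b(1) by blast
  ultimately show ?thesis by linarith
qed

lemma hausdorff_dist_triangle:
  assumes "compact A" "A \<noteq> {}" "compact B" "B \<noteq> {}" "compact C" "C \<noteq> {}"
  shows "hausdorff_dist A C \<le> hausdorff_dist A B + hausdorff_dist B C"
proof -
  have "infdist a C \<le> hausdorff_dist A B + hausdorff_dist B C" if "a \<in> A" for a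
    using infdist_le_infdist_add_hausdorff_dist[of C B a] infdist_le_hausdorff_dist[of A B a]
      assms that by (simp add: hausdorff_dist_commute)
  moreover have "infdist c A \<le> hausdorff_dist A B + hausdorff_dist B C" if "c \<in> C" for c
    using infdist_le_infdist_add_hausdorff_dist[of A B c] infdist_le_hausdorff_dist[of C B c]
      assms that by (simp add: hausdorff_dist_commute)
  ultimately show ?thesis
    using hausdorff_dist_le_iff[OF assms(1,2,5,6)] by blast
qed

lemma infdist_lessE:
  assumes "infdist x A < e" "A \<noteq> {}"
  obtains a where "a \<in> A" "dist x a < e"
  using assms by (metis cINF_less_iff bdd_belowI2 infdist_notempty zero_le_dist)

lemma hausdorff_dist_image_less:
  assumes "finite P" "P \<noteq> {}" "\<And>p. p \<in> P \<Longrightarrow> dist (s p) (t p) < d"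
  shows "hausdorff_dist (s ` P) (t ` P) < d"
proof -
  have "infdist (s p) (t ` P) < d" "infdist (t p) (s ` P) < d" if "p \<in> P" for p
    using infdist_le[of "t p" "t ` P" "s p"] infdist_le[of "s p" "s ` P" "t p"] assms(3)[OF that] that
    by (auto simp: dist_commute)
  then show ?thesis
    using assms(1,2) by (subst hausdorff_dist_less_iff) (auto intro: finite_imp_compact)
qed

lemma hausdorff_dist_superset_le_iff:
  assumes "compact X" "S \<in> KX X" "0 \<le> c"
  shows "hausdorff_dist S X \<le> c \<longleftrightarrow> (\<forall>x\<in>X. infdist x S \<le> c)"
proof -
  have S: "compact S" "S \<noteq> {}" "S \<subseteq> X" using assms(2) by (auto simp: KX_def)
  then have "\<forall>a\<in>S. infdist a X = 0" by auto
  then show ?thesis using hausdorff_dist_le_iff[OF S(1,2) assms(1)] S assms(3) by auto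
qed

lemma hausdorff_dist_superset_less_iff:
  assumes "compact X" "S \<in> KX X" "0 < c"
  shows "hausdorff_dist S X < c \<longleftrightarrow> (\<forall>x\<in>X. infdist x S < c)"
proof -
  have S: "compact S" "S \<noteq> {}" "S \<subseteq> X" using assms(2) by (auto simp: KX_def)
  then have "\<forall>a\<in>S. infdist a X = 0" by auto
  then show ?thesis using hausdorff_dist_less_iff[OF S(1,2) assms(1)] S assms(3) by auto
qed

lemma hausdorff_dist_superset_antimono:
  assumes "compact X" "A \<in> KX X" "B \<in> KX X" "A \<subseteq> B"
  shows "hausdorff_dist B X \<le> hausdorff_dist A X"
proof -
  have "A \<noteq> {}" "compact A" using assms(2) by (auto simp: KX_def)
  then have "0 \<le> hausdorff_dist A X"
    using assms(2) by (intro hausdorff_dist_nonneg assms(1)) (auto simp: KX_def)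
  then show ?thesis
    using assms hausdorff_dist_superset_le_iff infdist_mono[OF assms(4) \<open>A \<noteq> {}\<close>]
    by (meson order_trans order_refl)
qed

lemma KX_map_funpow: "KX_map X F \<Longrightarrow> S \<in> KX X \<Longrightarrow> (F ^^ n) S \<in> KX X"
  by (induction n) (auto simp: KX_map_def)

lemma KX_monotone_funpow:
  assumes "KX_map X F" "KX_monotone X F" "A \<in> KX X" "B \<in> KX X" "A \<subseteq> B"
  shows "(F ^^ n) A \<subseteq> (F ^^ n) B"
proof (induction n)
  case (Suc n)
  have "(F ^^ n) A \<in> KX X" "(F ^^ n) B \<in> KX X"
    using KX_map_funpow assms(1,3,4) by blast+
  then show ?case
    using assms(2) Suc.IH unfolding KX_monotone_def by simp
qed (use assms(5) in simp)

lemma KX_continuous_funpow: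
  assumes "KX_map X F" "KX_continuous X F"
  shows "KX_continuous X (F ^^ n)"
proof (induction n)
  case 0
  then show ?case by (auto simp: KX_continuous_def)
next
  case (Suc n)
  show ?case
    unfolding KX_continuous_def
  proof (intro ballI allI impI)
    fix S :: "'a set" and e :: real assume S: "S \<in> KX X" and "e > 0"
    then obtain d1 where "d1 > 0" and d1: "\<And>T. T \<in> KX X \<Longrightarrow>
        hausdorff_dist T ((F ^^ n) S) < d1 \<Longrightarrow> hausdorff_dist (F T) (F ((F ^^ n) S)) < e"
      using assms KX_map_funpow unfolding KX_continuous_def by meson
    then obtain d where "d > 0" and d: "\<And>T. T \<in> KX X \<Longrightarrow>
        hausdorff_dist T S < d \<Longrightarrow> hausdorff_dist ((F ^^ n) T) ((F ^^ n) S) < d1"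
      using Suc.IH S unfolding KX_continuous_def by meson
    show "\<exists>d>0. \<forall>T\<in>KX X. hausdorff_dist T S < d \<longrightarrow>
        hausdorff_dist ((F ^^ Suc n) T) ((F ^^ Suc n) S) < e"
      using \<open>d > 0\<close> d d1 KX_map_funpow[OF assms(1)] by auto
  qed
qed

lemma attractor_whole_space_fixpoint:
  assumes "compact X" "KX_map X F" "KX_monotone X F" "attractor X F X"
  shows "F X = X"
proof -
  obtain U where "X \<in> U" and conv: "\<And>C. C \<in> U \<Longrightarrow> (\<lambda>n. hausdorff_dist ((F ^^ n) C) X) \<longlonglongrightarrow> 0"
    using assms(4) by (auto simp: attractor_def)
  have XK: "X \<in> KX X" and FXK: "F X \<in> KX X"
    using assms(2,4) by (auto simp: attractor_def KX_map_def)
  have "hausdorff_dist (F X) X \<le> hausdorff_dist ((F ^^ Suc n) X) X" for n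
  proof (rule hausdorff_dist_superset_antimono[OF assms(1) _ FXK])
    show "(F ^^ Suc n) X \<in> KX X" using KX_map_funpow[OF assms(2) XK] .
    have "(F ^^ n) X \<subseteq> X" using KX_map_funpow[OF assms(2) XK] by (simp add: KX_def)
    then show "(F ^^ Suc n) X \<subseteq> F X"
      using assms(3) KX_map_funpow[OF assms(2) XK] XK by (simp add: KX_monotone_def)
  qed
  moreover have "(\<lambda>n. hausdorff_dist ((F ^^ Suc n) X) X) \<longlonglongrightarrow> 0"
    using LIMSEQ_Suc[OF conv[OF \<open>X \<in> U\<close>]] .
  ultimately have "hausdorff_dist (F X) X \<le> 0"
    by (intro LIMSEQ_le_const) auto
  moreover have "compact (F X)" "F X \<noteq> {}" using FXK by (auto simp: KX_def)
  ultimately show "F X = X"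
    using hausdorff_dist_nonneg[of "F X" X] hausdorff_dist_eq_0_iff[of "F X" X] assms(1) XK
    by (auto simp: KX_def)
qed

lemma attractor_whole_space_uniform_below:
  assumes "compact X" "KX_map X F" "KX_continuous X F" "KX_monotone X F" "attractor X F X" "e > 0"
  shows "\<exists>d>0. \<forall>n<N. \<forall>S\<in>KX X. hausdorff_dist S X < d \<longrightarrow> hausdorff_dist ((F ^^ n) S) X < e"
proof (induction N)
  case 0
  show ?case using zero_less_one by blast
next
  case (Suc N)
  then obtain d1 where "d1 > 0"
    and d1: "\<forall>n<N. \<forall>S\<in>KX X. hausdorff_dist S X < d1 \<longrightarrow> hausdorff_dist ((F ^^ n) S) X < e"
    by blast
  have XK: "X \<in> KX X" using assms(5) by (simp add: attractor_def)
  have "(F ^^ N) X = X"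
    by (induction N) (simp_all add: attractor_whole_space_fixpoint[OF assms(1,2,4,5)])
  moreover obtain d2 where "d2 > 0" and d2: "\<And>S. S \<in> KX X \<Longrightarrow> hausdorff_dist S X < d2 \<Longrightarrow>
      hausdorff_dist ((F ^^ N) S) ((F ^^ N) X) < e"
    using KX_continuous_funpow[OF assms(2,3)] XK assms(6) unfolding KX_continuous_def by blast
  ultimately have "\<forall>n<Suc N. \<forall>S\<in>KX X. hausdorff_dist S X < min d1 d2 \<longrightarrow> hausdorff_dist ((F ^^ n) S) X < e"
    using d1 by (auto simp: less_Suc_eq)
  then show ?case using \<open>d1 > 0\<close> \<open>d2 > 0\<close> by (intro exI[of _ "min d1 d2"]) simp
qed

lemma finite_image_in_KX: "finite P \<Longrightarrow> P \<noteq> {} \<Longrightarrow> s ` P \<subseteq> X \<Longrightarrow> s ` P \<in> KX X"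
  by (simp add: KX_def finite_imp_compact)

lemma openin_product_subsets_contains_box:
  fixes X :: "'a::metric_space set"
  assumes "finite P" "\<And>p. p \<in> P \<Longrightarrow> open (B p)"
    and "openin (product_topology (\<lambda>p. top_of_set (X \<inter> B p)) P) W" "s \<in> W"
  obtains \<delta> where "\<delta> > 0"
    "\<And>t. t \<in> extensional P \<Longrightarrow> (\<And>p. p \<in> P \<Longrightarrow> t p \<in> X \<and> dist (t p) (s p) < \<delta>) \<Longrightarrow> t \<in> W"
proof -
  obtain V where V: "\<And>p. p \<in> P \<Longrightarrow> openin (top_of_set (X \<inter> B p)) (V p)" "s \<in> PiE P V" "PiE P V \<subseteq> W"
    using assms(3,4) unfolding openin_product_topology_alt by metis
  have "\<exists>\<rho>>0. \<forall>y\<in>X. dist y (s p) < \<rho> \<longrightarrow> y \<in> V p" if "p \<in> P" for p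
  proof -
    have "openin (top_of_set X) (V p)"
      using V(1)[OF that] openin_open_Int[OF assms(2)[OF that]] by (rule openin_trans)
    then show ?thesis
      using V(2) that unfolding openin_euclidean_subtopology_iff by auto
  qed
  then obtain \<rho> where \<rho>: "\<And>p. p \<in> P \<Longrightarrow> \<rho> p > 0"
    "\<And>p y. p \<in> P \<Longrightarrow> y \<in> X \<Longrightarrow> dist y (s p) < \<rho> p \<Longrightarrow> y \<in> V p"
    by metis
  define \<delta> where "\<delta> = Min (insert 1 (\<rho> ` P))" \<comment> \<open>\<open>insert 1\<close> keeps \<open>Min\<close> meaningful for \<open>P = {}\<close>\<close>
  have "\<delta> > 0" and \<delta>_le: "\<And>p. p \<in> P \<Longrightarrow> \<delta> \<le> \<rho> p"
    unfolding \<delta>_def using assms(1) \<rho>(1) by (auto simp: Min_gr_iff)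
  show ?thesis
  proof (rule that[OF \<open>\<delta> > 0\<close>])
    fix t assume "t \<in> extensional P" and t: "\<And>p. p \<in> P \<Longrightarrow> t p \<in> X \<and> dist (t p) (s p) < \<delta>"
    moreover have "t p \<in> V p" if "p \<in> P" for p
      using \<rho>(2)[OF that] t[OF that] \<delta>_le[OF that] by simp
    ultimately have "t \<in> PiE P V" by (simp add: PiE_iff)
    then show "t \<in> W" using V(3) by blast
  qed
qed

lemma locally_compact_regular_product_open_subsets:
  fixes X :: "'a::metric_space set"
  assumes "compact X" "finite P" "\<And>p. p \<in> P \<Longrightarrow> open (B p)"
  shows "locally_compact_space (product_topology (\<lambda>p. top_of_set (X \<inter> B p)) P)
       \<and> regular_space (product_topology (\<lambda>p. top_of_set (X \<inter> B p)) P)"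
proof -
  have regular: "regular_space (top_of_set A)" for A :: "'a set"
    by (intro metrizable_imp_regular_space metrizable_space_subtopology metrizable_space_euclidean)
  have "locally_compact_space (subtopology (top_of_set X) (X \<inter> B p))" if "p \<in> P" for p
  proof (rule locally_compact_space_open_subset)
    show "locally_compact_space (top_of_set X)"
      using assms(1) by (intro compact_imp_locally_compact_space compact_space_subtopology) simp
    show "openin (top_of_set X) (X \<inter> B p)"
      using assms(3)[OF that] by blast
  qed (use regular in blast)
  then show ?thesis
    unfolding locally_compact_space_product_topology regular_space_product_topology
    using regular assms(2) by (auto simp: subtopology_subtopology)
qed

lemma funpow_tail_set_closedin:
  fixes X :: "'a::metric_space set"
  assumes "compact X" "KX_map X F" "KX_continuous X F"
    and "finite P" "P \<noteq> {}" "\<And>p. p \<in> P \<Longrightarrow> open (B p)"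
  shows "closedin (product_topology (\<lambda>p. top_of_set (X \<inter> B p)) P)
     {s \<in> PiE P (\<lambda>p. X \<inter> B p). \<forall>n\<ge>N. hausdorff_dist ((F ^^ n) (s ` P)) X \<le> e}"
    (is "closedin ?Y ?Q")
  unfolding closedin_def
proof (intro conjI)
  show "?Q \<subseteq> topspace ?Y" by auto
  have sK: "s ` P \<in> KX X" if "s \<in> PiE P (\<lambda>p. X \<inter> B p)" for s
    using that assms(4,5) by (intro finite_image_in_KX) auto
  show "openin ?Y (topspace ?Y - ?Q)"
  proof (subst openin_subopen, intro ballI)
    fix s assume s: "s \<in> topspace ?Y - ?Q"
    then obtain n where "n \<ge> N" and far: "e < hausdorff_dist ((F ^^ n) (s ` P)) X"
      by auto
    \<comment> \<open>Perturbing the points moves \<open>F\<^sup>n(s P)\<close> by less than the excess \<open>c\<close> over \<open>e\<close>.\<close>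
    define c where "c = hausdorff_dist ((F ^^ n) (s ` P)) X - e"
    have "c > 0" using far by (simp add: c_def)
    then obtain d where "d > 0" and d: "\<And>T. T \<in> KX X \<Longrightarrow> hausdorff_dist T (s ` P) < d \<Longrightarrow>
        hausdorff_dist ((F ^^ n) T) ((F ^^ n) (s ` P)) < c"
      using KX_continuous_funpow[OF assms(2,3)] sK s unfolding KX_continuous_def by force
    define T where "T = PiE P (\<lambda>p. X \<inter> B p \<inter> ball (s p) d)"
    have "openin ?Y T"
      unfolding T_def openin_PiE_gen using assms(4,6)
      by (intro disjI2 conjI ballI openin_open_Int open_Int open_ball) (auto intro: finite_subset)
    moreover have "s \<in> T" using s \<open>d > 0\<close> by (auto simp: T_def PiE_iff)
    moreover have "T \<subseteq> topspace ?Y - ?Q"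
    proof
      fix t assume t: "t \<in> T"
      then have tY: "t \<in> PiE P (\<lambda>p. X \<inter> B p)" by (auto simp: T_def PiE_iff)
      have "hausdorff_dist (t ` P) (s ` P) < d"
        using t assms(4,5) by (intro hausdorff_dist_image_less) (auto simp: T_def PiE_iff dist_commute)
      then have "hausdorff_dist ((F ^^ n) (s ` P)) ((F ^^ n) (t ` P)) < c"
        using d[OF sK[OF tY]] by (simp add: hausdorff_dist_commute)
      moreover have "hausdorff_dist ((F ^^ n) (s ` P)) X
          \<le> hausdorff_dist ((F ^^ n) (s ` P)) ((F ^^ n) (t ` P)) + hausdorff_dist ((F ^^ n) (t ` P)) X"
        using KX_map_funpow[OF assms(2) sK] s KX_map_funpow[OF assms(2) sK[OF tY]] assms(1)
        by (intro hausdorff_dist_triangle) (auto simp: KX_def)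
      ultimately show "t \<in> topspace ?Y - ?Q"
        using tY \<open>n \<ge> N\<close> by (auto simp: c_def)
    qed
    ultimately show "\<exists>T. openin ?Y T \<and> s \<in> T \<and> T \<subseteq> topspace ?Y - ?Q" by blast
  qed
qed

lemma hausdorff_dist_perturbed_net_less:
  assumes "compact X" "X \<noteq> {}" "finite P" "X \<subseteq> (\<Union>p\<in>P. ball p \<eta>)" "s \<in> PiE P (\<lambda>p. X \<inter> ball p \<eta>)"
  shows "hausdorff_dist (s ` P) X < 2 * \<eta>"
proof -
  have "P \<noteq> {}" "s ` P \<subseteq> X" using assms(2,4,5) by (auto simp: PiE_iff)
  then have sK: "s ` P \<in> KX X" using assms(3) by (intro finite_image_in_KX)
  have "infdist x (s ` P) < 2 * \<eta>" if "x \<in> X" for x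
  proof -
    obtain p where p: "p \<in> P" "dist p x < \<eta>" using assms(4) \<open>x \<in> X\<close> by auto
    then have "dist p (s p) < \<eta>" using assms(5) by auto
    then have "dist x (s p) < 2 * \<eta>" using p(2) dist_triangle[of x "s p" p] by (simp add: dist_commute)
    then show ?thesis using infdist_le[of "s p" "s ` P" x] p(1) by simp
  qed
  moreover have "0 < 2 * \<eta>"
    using \<open>P \<noteq> {}\<close> assms(5) by (force simp: PiE_iff intro: le_less_trans[OF zero_le_dist])
  ultimately show ?thesis using hausdorff_dist_superset_less_iff[OF assms(1) sK] by blast
qed

lemma attractor_whole_space_tail_near_finite_set:
  fixes X :: "'a::metric_space set"
  assumes X: "compact X" "X \<noteq> {}" and F: "KX_map X F" "KX_continuous X F"
    and att: "attractor X F X" and "e > 0"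
  obtains P :: "'a set" and s0 \<delta> N where "finite P" "P \<noteq> {}" "s0 ` P \<subseteq> X" "\<delta> > 0"
    "\<And>t n. (\<And>p. p \<in> P \<Longrightarrow> t p \<in> X \<and> dist (t p) (s0 p) < \<delta>) \<Longrightarrow> N \<le> n \<Longrightarrow>
       hausdorff_dist ((F ^^ n) (t ` P)) X \<le> e"
proof -
  obtain U where U: "KX_open X U" "X \<in> U"
    and conv: "\<And>C. C \<in> U \<Longrightarrow> (\<lambda>n. hausdorff_dist ((F ^^ n) C) X) \<longlonglongrightarrow> 0"
    using att by (auto simp: attractor_def)
  obtain r where "r > 0" and r: "\<And>T. T \<in> KX X \<Longrightarrow> hausdorff_dist T X < r \<Longrightarrow> T \<in> U"
    using U unfolding KX_open_def by blast
  obtain P where P: "P \<subseteq> X" "finite P" "X \<subseteq> (\<Union>p\<in>P. ball p (r/2))"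
    using compactE_image[OF X(1), of X "\<lambda>p. ball p (r/2)"] \<open>r > 0\<close>
    by (metis open_ball UN_I centre_in_ball subsetI half_gt_zero)
  have "P \<noteq> {}" using P(3) X(2) by auto
  define Y where "Y = product_topology (\<lambda>p. top_of_set (X \<inter> ball p (r/2))) P"
  define Q where "Q N = {s \<in> PiE P (\<lambda>p. X \<inter> ball p (r/2)).
      \<forall>n\<ge>N. hausdorff_dist ((F ^^ n) (s ` P)) X \<le> e}" for N
  have "\<exists>N. s \<in> Q N" if s: "s \<in> PiE P (\<lambda>p. X \<inter> ball p (r/2))" for s
  proof -
    have "s ` P \<in> KX X" using s P(2) \<open>P \<noteq> {}\<close> by (intro finite_image_in_KX) auto
    moreover have "hausdorff_dist (s ` P) X < r"
      using hausdorff_dist_perturbed_net_less[OF X P(2,3) s] by simp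
    ultimately obtain N where "\<And>n. n \<ge> N \<Longrightarrow> hausdorff_dist ((F ^^ n) (s ` P)) X < e"
      using r order_tendstoD(2)[OF conv \<open>e > 0\<close>] unfolding eventually_sequentially by blast
    then show ?thesis using s unfolding Q_def by (auto intro: less_imp_le)
  qed
  then have cover: "topspace Y = \<Union>(range Q)" by (auto simp: Y_def Q_def)
  have "\<exists>N. Y interior_of Q N \<noteq> {}"
  proof (rule ccontr)
    assume "\<nexists>N. Y interior_of Q N \<noteq> {}"
    then have "Y interior_of \<Union>(range Q) = {}"
      using locally_compact_regular_product_open_subsets[OF X(1) P(2)]
        funpow_tail_set_closedin[OF X(1) F P(2) \<open>P \<noteq> {}\<close>]
      by (intro Baire_category_alt) (auto simp: Y_def Q_def)
    moreover have "restrict id P \<in> topspace Y" using P(1) \<open>r > 0\<close> by (auto simp: Y_def)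
    ultimately show False by (simp add: cover[symmetric])
  qed
  then obtain N s0 where "s0 \<in> Y interior_of Q N" by blast
  then obtain W where W: "openin Y W" "s0 \<in> W" "W \<subseteq> Q N" unfolding interior_of_def by blast
  obtain \<delta> where "\<delta> > 0" and \<delta>: "\<And>t. t \<in> extensional P \<Longrightarrow>
      (\<And>p. p \<in> P \<Longrightarrow> t p \<in> X \<and> dist (t p) (s0 p) < \<delta>) \<Longrightarrow> t \<in> W"
    using openin_product_subsets_contains_box[OF P(2) _ W(1)[unfolded Y_def] W(2)] by blast
  show thesis
  proof (rule that[of P s0 \<delta> N])
    show "finite P" "P \<noteq> {}" "\<delta> > 0" by fact+
    show "s0 ` P \<subseteq> X" using W(2,3) by (auto simp: Q_def)
    fix t n assume "\<And>p. p \<in> P \<Longrightarrow> t p \<in> X \<and> dist (t p) (s0 p) < \<delta>" and "N \<le> n"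
    then have "restrict t P \<in> Q N" using \<delta> W(3) by auto
    then show "hausdorff_dist ((F ^^ n) (t ` P)) X \<le> e" using \<open>N \<le> n\<close> by (simp add: Q_def)
  qed
qed

lemma attractor_whole_space_uniform_tail:
  fixes X :: "'a::metric_space set"
  assumes X: "compact X" "X \<noteq> {}" and F: "KX_map X F" "KX_continuous X F" "KX_monotone X F"
    and att: "attractor X F X" and "e > 0"
  shows "\<exists>N. \<exists>\<delta>>0. \<forall>S\<in>KX X. hausdorff_dist S X < \<delta> \<longrightarrow> (\<forall>n\<ge>N. hausdorff_dist ((F ^^ n) S) X \<le> e)"
proof -
  obtain P :: "'a set" and s0 \<delta> N where "finite P" "P \<noteq> {}" "s0 ` P \<subseteq> X" "\<delta> > 0"
    and tail: "\<And>t n. (\<And>p. p \<in> P \<Longrightarrow> t p \<in> X \<and> dist (t p) (s0 p) < \<delta>) \<Longrightarrow> N \<le> n \<Longrightarrow>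
       hausdorff_dist ((F ^^ n) (t ` P)) X \<le> e"
    by (rule attractor_whole_space_tail_near_finite_set[OF X F(1,2) att \<open>e > 0\<close>]) blast
  have "hausdorff_dist ((F ^^ n) S) X \<le> e"
    if S: "S \<in> KX X" "hausdorff_dist S X < \<delta>" and "N \<le> n" for S n
  proof -
    have SX: "S \<subseteq> X" "S \<noteq> {}" using S(1) by (auto simp: KX_def)
    have "\<exists>y\<in>S. dist y (s0 p) < \<delta>" if "p \<in> P" for p
    proof -
      have "infdist (s0 p) S < \<delta>"
        using S hausdorff_dist_superset_less_iff[OF X(1) S(1) \<open>\<delta> > 0\<close>] \<open>s0 ` P \<subseteq> X\<close> that by auto
      then show ?thesis using infdist_lessE[OF _ SX(2)] by (metis dist_commute)
    qed
    then obtain t where t: "\<And>p. p \<in> P \<Longrightarrow> t p \<in> S \<and> dist (t p) (s0 p) < \<delta>" by metis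
    have tK: "t ` P \<in> KX X" using t SX \<open>finite P\<close> \<open>P \<noteq> {}\<close> by (intro finite_image_in_KX) auto
    have "hausdorff_dist ((F ^^ n) S) X \<le> hausdorff_dist ((F ^^ n) (t ` P)) X"
      using t by (intro hausdorff_dist_superset_antimono X(1) KX_map_funpow[OF F(1)]
          KX_monotone_funpow[OF F(1,3)] tK S(1)) auto
    also have "\<dots> \<le> e"
      by (rule tail[OF _ \<open>N \<le> n\<close>]) (use t SX in auto)
    finally show ?thesis .
  qed
  then show ?thesis using \<open>\<delta> > 0\<close> by blast
qed

lemma monotone_attractor_whole_space_asymptotically_stable:
  fixes X :: "'a::metric_space set"
  assumes X: "compact X" "X \<noteq> {}" and F: "KX_map X F" "KX_continuous X F" "KX_monotone X F"
    and att: "attractor X F X"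
  shows "asymptotically_stable X F X"
  unfolding asymptotically_stable_def
proof (intro conjI allI impI att)
  fix \<epsilon> :: real assume "\<epsilon> > 0"
  then obtain N d1 where "d1 > 0" and tail: "\<forall>S\<in>KX X. hausdorff_dist S X < d1 \<longrightarrow>
      (\<forall>n\<ge>N. hausdorff_dist ((F ^^ n) S) X \<le> \<epsilon>/2)"
    using attractor_whole_space_uniform_tail[OF X F att, of "\<epsilon>/2"] by auto
  obtain d2 where "d2 > 0" and below: "\<forall>n<N. \<forall>S\<in>KX X. hausdorff_dist S X < d2 \<longrightarrow>
      hausdorff_dist ((F ^^ n) S) X < \<epsilon>"
    using attractor_whole_space_uniform_below[OF X(1) F att \<open>\<epsilon> > 0\<close>] by blast
  have "hausdorff_dist ((F ^^ n) S) X < \<epsilon>" if "S \<in> KX X" "hausdorff_dist S X < min d1 d2" for n S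
  proof (cases "n < N")
    case True
    then show ?thesis using below that by auto
  next
    case False
    then have "hausdorff_dist ((F ^^ n) S) X \<le> \<epsilon>/2" using tail that by auto
    then show ?thesis using \<open>\<epsilon> > 0\<close> by linarith
  qed
  then show "\<exists>\<delta>>0. \<forall>n. \<forall>S\<in>KX X. hausdorff_dist S X < \<delta> \<longrightarrow> hausdorff_dist ((F ^^ n) S) X < \<epsilon>"
    using \<open>d1 > 0\<close> \<open>d2 > 0\<close> by (intro exI[of _ "min d1 d2"]) auto
qed

lemma strict_attractor_whole_space_imp_attractor:
  assumes "strict_attractor X F X"
  shows "attractor X F X"
proof -
  obtain U where "X \<in> KX X" "X \<subseteq> U"
    and conv: "\<And>S. S \<subseteq> U \<Longrightarrow> compact S \<Longrightarrow> S \<noteq> {} \<Longrightarrow>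
      (\<lambda>n. hausdorff_dist ((F ^^ n) S) X) \<longlonglongrightarrow> 0"
    using assms unfolding strict_attractor_def by blast
  moreover have "KX_open X (KX X)"
    unfolding KX_open_def using zero_less_one by blast
  ultimately show ?thesis
    unfolding attractor_def by (intro conjI exI[of _ "KX X"]) (auto simp: KX_def)
qed

lemma hutchinson_KX_map:
  assumes "finite Fs" "Fs \<noteq> {}" "\<forall>f\<in>Fs. continuous_on X f \<and> f ` X \<subseteq> X"
  shows "KX_map X (hutchinson Fs)"
  unfolding KX_map_def
proof
  fix S assume "S \<in> KX X"
  then have S: "compact S" "S \<noteq> {}" "S \<subseteq> X" by (auto simp: KX_def)
  have "compact (f ` S)" if "f \<in> Fs" for f
    using assms(3) that S continuous_on_subset by (blast intro: compact_continuous_image)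
  then have "compact (\<Union>f\<in>Fs. f ` S)" using assms(1) by (intro compact_UN) auto
  then show "hutchinson Fs S \<in> KX X"
    using assms(2,3) S unfolding KX_def hutchinson_def by blast
qed

lemma hutchinson_KX_monotone: "KX_monotone X (hutchinson Fs)"
  unfolding KX_monotone_def hutchinson_def by blast

lemma finite_family_uniform_modulus:
  assumes "compact X" "finite Fs" "\<forall>f\<in>Fs. continuous_on X f" "e > 0"
  obtains \<delta> where "\<delta> > 0"
    "\<And>f x y. f \<in> Fs \<Longrightarrow> x \<in> X \<Longrightarrow> y \<in> X \<Longrightarrow> dist x y < \<delta> \<Longrightarrow> dist (f x) (f y) < e"
proof -
  have "\<exists>d>0. \<forall>x\<in>X. \<forall>y\<in>X. dist y x < d \<longrightarrow> dist (f y) (f x) < e" if "f \<in> Fs" for f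
    using compact_uniformly_continuous[OF _ assms(1)] assms(3,4) that
    unfolding uniformly_continuous_on_def by blast
  then obtain d where d: "\<And>f. f \<in> Fs \<Longrightarrow> d f > 0"
    "\<And>f x y. f \<in> Fs \<Longrightarrow> x \<in> X \<Longrightarrow> y \<in> X \<Longrightarrow> dist y x < d f \<Longrightarrow> dist (f y) (f x) < e"
    by metis
  define \<delta> where "\<delta> = Min (insert 1 (d ` Fs))"
  have "\<delta> > 0" and \<delta>_le: "\<And>f. f \<in> Fs \<Longrightarrow> \<delta> \<le> d f"
    unfolding \<delta>_def using assms(2) d(1) by (auto simp: Min_gr_iff)
  show ?thesis
  proof (rule that[OF \<open>\<delta> > 0\<close>])
    fix f x y assume "f \<in> Fs" "x \<in> X" "y \<in> X" "dist x y < \<delta>"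
    then show "dist (f x) (f y) < e" using d(2)[of f y x] \<delta>_le[of f] by simp
  qed
qed

lemma infdist_hutchinson_less:
  assumes "a \<in> hutchinson Fs A" "A \<subseteq> X" "B \<subseteq> X" "B \<noteq> {}" "\<forall>z\<in>A. infdist z B < \<delta>"
    and modulus: "\<And>f x y. f \<in> Fs \<Longrightarrow> x \<in> X \<Longrightarrow> y \<in> X \<Longrightarrow> dist x y < \<delta> \<Longrightarrow> dist (f x) (f y) < e"
  shows "infdist a (hutchinson Fs B) < e"
proof -
  obtain f z where "f \<in> Fs" "z \<in> A" "a = f z" using assms(1) unfolding hutchinson_def by blast
  moreover obtain y where "y \<in> B" "dist z y < \<delta>" using infdist_lessE assms(4,5) \<open>z \<in> A\<close> by metis
  moreover have "f y \<in> hutchinson Fs B" using \<open>f \<in> Fs\<close> \<open>y \<in> B\<close> unfolding hutchinson_def by blast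
  ultimately have "dist a (f y) < e" and "infdist a (hutchinson Fs B) \<le> dist a (f y)"
    using modulus[of f z y] assms(2,3) infdist_le by auto
  then show ?thesis by linarith
qed

lemma hutchinson_KX_continuous:
  assumes "compact X" "finite Fs" "Fs \<noteq> {}" "\<forall>f\<in>Fs. continuous_on X f \<and> f ` X \<subseteq> X"
  shows "KX_continuous X (hutchinson Fs)"
  unfolding KX_continuous_def
proof (intro ballI allI impI)
  fix S and e :: real assume S: "S \<in> KX X" and "e > 0"
  obtain \<delta> where "\<delta> > 0" and modulus: "\<And>f x y. f \<in> Fs \<Longrightarrow> x \<in> X \<Longrightarrow> y \<in> X \<Longrightarrow>
      dist x y < \<delta> \<Longrightarrow> dist (f x) (f y) < e"
    using finite_family_uniform_modulus[OF assms(1,2) _ \<open>e > 0\<close>] assms(4) by blast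
  have "hausdorff_dist (hutchinson Fs T) (hutchinson Fs S) < e"
    if T: "T \<in> KX X" "hausdorff_dist T S < \<delta>" for T
  proof -
    have KT: "compact T" "T \<noteq> {}" "T \<subseteq> X" and KS: "compact S" "S \<noteq> {}" "S \<subseteq> X"
      using T(1) S by (auto simp: KX_def)
    have hK: "hutchinson Fs T \<in> KX X" "hutchinson Fs S \<in> KX X"
      using hutchinson_KX_map[OF assms(2-4)] T(1) S by (auto simp: KX_map_def)
    have near: "\<forall>z\<in>T. infdist z S < \<delta>" "\<forall>z\<in>S. infdist z T < \<delta>"
      using T(2) hausdorff_dist_less_iff[OF KT(1,2) KS(1,2)] by blast+
    have "infdist a (hutchinson Fs S) < e" if "a \<in> hutchinson Fs T" for a
      using that KT(3) KS(3) KS(2) near(1) modulus by (rule infdist_hutchinson_less)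
    moreover have "infdist b (hutchinson Fs T) < e" if "b \<in> hutchinson Fs S" for b
      using that KS(3) KT(3) KT(2) near(2) modulus by (rule infdist_hutchinson_less)
    ultimately show ?thesis
      using hK by (subst hausdorff_dist_less_iff) (auto simp: KX_def)
  qed
  then show "\<exists>d>0. \<forall>T\<in>KX X. hausdorff_dist T S < d \<longrightarrow>
      hausdorff_dist (hutchinson Fs T) (hutchinson Fs S) < e"
    using \<open>\<delta> > 0\<close> by blast
qed

theorem theoremD:
  fixes X :: "'a::metric_space set"
  assumes "compact X" and "X \<noteq> {}"
  shows "(\<forall>F. KX_map X F \<and> KX_continuous X F \<and> KX_monotone X F \<and> attractor X F X
            \<longrightarrow> asymptotically_stable X F X)
       \<and> (\<forall>Fs. finite Fs \<and> Fs \<noteq> {} \<and> (\<forall>f\<in>Fs. continuous_on X f \<and> f ` X \<subseteq> X)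
            \<and> strict_attractor X (hutchinson Fs) X
            \<longrightarrow> asymptotically_stable X (hutchinson Fs) X)"
proof (intro conjI allI impI)
  fix F assume "KX_map X F \<and> KX_continuous X F \<and> KX_monotone X F \<and> attractor X F X"
  then show "asymptotically_stable X F X"
    using monotone_attractor_whole_space_asymptotically_stable[OF assms] by blast
next
  fix Fs assume "finite Fs \<and> Fs \<noteq> {} \<and> (\<forall>f\<in>Fs. continuous_on X f \<and> f ` X \<subseteq> X)
      \<and> strict_attractor X (hutchinson Fs) X"
  then show "asymptotically_stable X (hutchinson Fs) X"
    by (intro monotone_attractor_whole_space_asymptotically_stable assms hutchinson_KX_map
        hutchinson_KX_continuous hutchinson_KX_monotone strict_attractor_whole_space_imp_attractor) auto
qed

end
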